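(* Let $I$ be a closed interval, and let $F=(f,g)\colon I\to\mathbb{R}^2$ and $G\colon\mathbb{R}^2\to I$ be continuous functions such that $\mathscr{L}_{F,G}$ is a repetition invariant mean on $I$ without a negligible element. Suppose additionally that $g$ is positive on $I$. Then $f/g$ is injective on $I$.
   Context: A mean on $I$ is a function $\mathscr{M}\colon\bigcup_{n\ge1}I^n\to I$ with $\min(a)\le\mathscr{M}(a)\le\max(a)$. Here $\mathscr{L}_{F,G}(a_1,\dots,a_n):=G(F(a_1)+\cdots+F(a_n))$. $\mathscr{M}$ is repetition invariant if $\mathscr{M}(x_1,\dots,x_1,\dots,x_n,\dots,x_n)=\mathscr{M}(x_1,\dots,x_n)$ for all $n,m\in\mathbb{N}$ and $(x_1,\dots,x_n)\in I^n$, each $x_i$ repeated $m$ times on the left. An element $e\in I$ is a negligible element of $\mathscr{M}$ if for every $a=(a_1,\dots,a_n)\in I^n$ with $n\ge2$ and every $s$ with $a_s=e$, $\mathscr{M}(a)=\mathscr{M}((a_i)_{i\ne s})$. *)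

theory Defs
  imports "HOL-Analysis.Analysis"
begin

definition quasi_sum_mean :: "(real \<Rightarrow> real \<times> real) \<Rightarrow> (real \<times> real \<Rightarrow> real) \<Rightarrow> real list \<Rightarrow> real" where
  "quasi_sum_mean F G xs = G (sum_list (map F xs))"

definition is_mean_on :: "real set \<Rightarrow> (real list \<Rightarrow> real) \<Rightarrow> bool" where
  "is_mean_on I M \<longleftrightarrow> (\<forall>xs. xs \<noteq> [] \<and> set xs \<subseteq> I \<longrightarrow>
      M xs \<in> I \<and> Min (set xs) \<le> M xs \<and> M xs \<le> Max (set xs))"

definition repetition_invariant_on :: "real set \<Rightarrow> (real list \<Rightarrow> real) \<Rightarrow> bool" where
  "repetition_invariant_on I M \<longleftrightarrow> (\<forall>xs m. xs \<noteq> [] \<and> set xs \<subseteq> I \<and> 1 \<le> m \<longrightarrow>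
      M (concat (map (replicate m) xs)) = M xs)"

definition negligible_element :: "real set \<Rightarrow> (real list \<Rightarrow> real) \<Rightarrow> real \<Rightarrow> bool" where
  "negligible_element I M e \<longleftrightarrow> e \<in> I \<and> (\<forall>xs s. set xs \<subseteq> I \<and> 2 \<le> length xs \<and> s < length xs \<and> xs ! s = e \<longrightarrow>
      M xs = M (take s xs @ drop (Suc s) xs))"

end

theory Submission
  imports Defs "HOL-Analysis.Fashoda_Theorem"
begin

(* Applied to one-point lists, the mean and repetition properties give G (n F(z)) = z for every
   n \<ge> 1, so F s = r F t with a positive rational r forces s = t. Now suppose f/g takes the same
   value at x < y and follow the plane curve s \<mapsto> (g s, f s / g s) on [x, y], whose end points
   lie on one horizontal line. Some arc of it stays weakly on one side of a horizontal line that it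
   meets at both of its ends; this arc and its horizontal stretch by a rational factor r slightly
   larger than 1 have interlaced end points on that line, so they cross by the Fashoda theorem.
   A crossing gives s \<noteq> t with f s / g s = f t / g t and g s = r g t, that is F s = r F t. *)

lemma continuous_on_vector_2 [continuous_intros]:
  fixes f g :: "'a::topological_space \<Rightarrow> real"
  assumes "continuous_on S f" "continuous_on S g"
  shows "continuous_on S (\<lambda>x. vector [f x, g x] :: real^2)"
proof -
  have components: "continuous_on S (\<lambda>x. if i = 1 then f x else g x)" for i :: 2
    using assms by (cases "i = 1") simp_all
  have vector_eq: "(\<lambda>x. vector [f x, g x] :: real^2) = (\<lambda>x. \<chi> i. if i = 1 then f x else g x)"
    by (auto simp: vec_eq_iff forall_2)
  show ?thesis
    unfolding vector_eq by (intro continuous_on_vec_lambda components)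
qed

lemma stretched_arc_meets_arc:
  fixes X Y :: "real \<Rightarrow> real"
  assumes X_cont: "continuous_on (closed_segment u v) X" and Y_cont: "continuous_on (closed_segment u v) Y"
    and above: "\<forall>s\<in>closed_segment u v. Y u \<le> Y s" and "Y v = Y u"
    and interlaced: "X u < r * X u" "r * X u < X v" "X v < r * X v"
  obtains s t where "s \<in> closed_segment u v" "t \<in> closed_segment u v" "Y s = Y t" "X s = r * X t"
proof -
  define P where "P s = (vector [X s, Y s] :: real^2)" for s
  define Q where "Q s = (vector [r * X s, Y s] :: real^2)" for s
  let ?f = "P \<circ> linepath u v" and ?g = "Q \<circ> linepath u v"
  have "continuous_on (closed_segment u v) P" "continuous_on (closed_segment u v) Q"
    unfolding P_def Q_def by (simp_all add: continuous_on_vector_2 continuous_on_mult_left X_cont Y_cont)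
  then have paths: "path ?f" "path ?g"
    by (simp_all add: path_continuous_image)
  have images: "path_image ?f = P ` closed_segment u v" "path_image ?g = Q ` closed_segment u v"
    by (simp_all add: path_image_compose)
  have "bounded (path_image ?f \<union> path_image ?g)"
    using paths by (simp add: compact_imp_bounded compact_path_image)
  then obtain c where c: "path_image ?f \<union> path_image ?g \<subseteq> cbox (- c) c"
    using bounded_subset_cbox_symmetric by blast
  define a where "a = (vector [- c $ 1, Y u] :: real^2)"
  have "P s \<in> cbox a c \<and> Q s \<in> cbox a c" if "s \<in> closed_segment u v" for s
  proof -
    have "P s \<in> cbox (- c) c" "Q s \<in> cbox (- c) c"
      using c that unfolding images by blast+
    then show ?thesis
      using above that by (simp add: mem_box_cart forall_2 a_def P_def Q_def)
  qed
  then have "path_image ?f \<subseteq> cbox a c" "path_image ?g \<subseteq> cbox a c"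
    unfolding images by blast+
  then obtain z where "z \<in> path_image ?f" "z \<in> path_image ?g"
    by (rule fashoda_interlace[OF paths])
      (simp_all add: pathstart_compose pathfinish_compose P_def Q_def a_def \<open>Y v = Y u\<close> interlaced)
  then obtain s t where st: "s \<in> closed_segment u v" "t \<in> closed_segment u v" "P s = Q t"
    unfolding images by auto
  then have "Y s = Y t" "X s = r * X t"
    unfolding P_def Q_def by (metis vector_2(2), metis vector_2(1))
  then show ?thesis
    using that st(1,2) by blast
qed

lemma rational_level_chord_above:
  fixes X Y :: "real \<Rightarrow> real"
  assumes "x < y" and X_cont: "continuous_on {x..y} X" and Y_cont: "continuous_on {x..y} Y"
    and X_pos: "\<forall>s\<in>{x..y}. 0 < X s" and "Y x = Y y" and above: "\<forall>s\<in>{x..y}. Y x \<le> Y s"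
  obtains s t r where "s \<in> {x..y}" "t \<in> {x..y}" "s \<noteq> t" "r \<in> \<rat>" "Y s = Y t" "X s = r * X t"
proof (cases "X x = X y")
  case True
  show ?thesis
    by (rule that[of x y 1]) (use True \<open>x < y\<close> \<open>Y x = Y y\<close> in auto)
next
  case False
  obtain u v where uv: "closed_segment u v = {x..y}" "Y u = Y x" "Y v = Y x" "X u < X v"
  proof (cases "X x < X y")
    case True
    show ?thesis
      by (rule that[of x y]) (use True \<open>x < y\<close> \<open>Y x = Y y\<close> in \<open>simp_all add: closed_segment_eq_real_ivl1\<close>)
  next
    case False
    show ?thesis
      by (rule that[of y x])
        (use False \<open>X x \<noteq> X y\<close> \<open>x < y\<close> \<open>Y x = Y y\<close> in \<open>simp_all add: closed_segment_eq_real_ivl\<close>)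
  qed
  have "u \<in> {x..y}" "v \<in> {x..y}"
    using uv(1) ends_in_segment by blast+
  then have "1 < X v / X u"
    using X_pos uv(4) by simp
  then obtain r where r: "r \<in> \<rat>" "1 < r" "r < X v / X u"
    using Rats_dense_in_real by blast
  have interlaced: "X u < r * X u" "r * X u < X v" "X v < r * X v"
    using r X_pos \<open>u \<in> {x..y}\<close> \<open>v \<in> {x..y}\<close> by (simp_all add: pos_less_divide_eq)
  obtain s t where st: "s \<in> {x..y}" "t \<in> {x..y}" "Y s = Y t" "X s = r * X t"
    by (rule stretched_arc_meets_arc[of u v X Y r, unfolded uv(1)])
      (use X_cont Y_cont above uv interlaced in simp_all)
  moreover have "s \<noteq> t"
  proof
    assume "s = t"
    moreover have "0 < X t"
      using X_pos st(2) by blast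
    ultimately show False
      using st(4) r(2) by simp
  qed
  ultimately show ?thesis
    by (intro that[OF st(1,2) _ r(1)])
qed

lemma above_level_if_connected_avoiding:
  fixes Y :: "'a::topological_space \<Rightarrow> real"
  assumes "connected S" "continuous_on S Y" "\<forall>s\<in>S. Y s \<noteq> d"
    and "m \<in> S" "d < Y m" "s \<in> S"
  shows "d < Y s"
proof (rule ccontr)
  assume "\<not> d < Y s"
  have "connected (Y ` S)"
    using assms(2,1) by (rule connected_continuous_image)
  then have "d \<in> Y ` S"
    by (rule connectedD_interval[of _ "Y s" "Y m"]) (use assms(4-6) \<open>\<not> d < Y s\<close> in auto)
  then show False
    using assms(3) by blast
qed

lemma level_interval_above:
  fixes Y :: "real \<Rightarrow> real"
  assumes Y_cont: "continuous_on {x..y} Y" and "Y x = d" "Y y = d" and m: "m \<in> {x..y}" "d < Y m"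
  obtains x' y' where "x \<le> x'" "x' < y'" "y' \<le> y" "Y x' = d" "Y y' = d" "\<forall>s\<in>{x'..y'}. d \<le> Y s"
proof -
  define L where "L = {s \<in> {x..m}. Y s = d}"
  define R where "R = {s \<in> {m..y}. Y s = d}"
  have "continuous_on {x..m} Y" "continuous_on {m..y} Y"
    using m(1) by (auto intro: continuous_on_subset[OF Y_cont])
  then have "closed L" "closed R"
    unfolding L_def R_def by (simp_all only: continuous_closed_preimage_constant closed_atLeastAtMost)
  moreover have "bounded L" "bounded R"
    unfolding L_def R_def by (auto intro: bounded_subset[OF bounded_closed_interval])
  ultimately have "compact L" "compact R"
    by (simp_all add: compact_eq_bounded_closed)
  moreover have "x \<in> L" "y \<in> R"
    using m(1) \<open>Y x = d\<close> \<open>Y y = d\<close> by (auto simp: L_def R_def)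
  ultimately obtain x' y' where x': "x' \<in> L" "\<forall>s\<in>L. s \<le> x'" and y': "y' \<in> R" "\<forall>s\<in>R. y' \<le> s"
    using compact_attains_sup[of L] compact_attains_inf[of R] by blast
  have "x' \<noteq> m" "y' \<noteq> m"
    using x'(1) y'(1) m(2) by (auto simp: L_def R_def)
  then have bounds: "x \<le> x'" "x' < m" "m < y'" "y' \<le> y" "Y x' = d" "Y y' = d"
    using x'(1) y'(1) by (auto simp: L_def R_def)
  have off_level: "\<forall>s\<in>{x'<..<y'}. Y s \<noteq> d"
  proof (intro ballI notI)
    fix s
    assume s: "s \<in> {x'<..<y'}" "Y s = d"
    then have "s \<in> L \<or> s \<in> R"
      using bounds by (auto simp: L_def R_def)
    then show False
      using x'(2) y'(2) s(1) by fastforce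
  qed
  have "continuous_on {x'<..<y'} Y"
    using bounds by (auto intro: continuous_on_subset[OF Y_cont])
  then have "d < Y s" if "s \<in> {x'<..<y'}" for s
    using above_level_if_connected_avoiding[OF connected_Ioo _ off_level _ m(2) that] bounds(2,3) by simp
  then have "\<forall>s\<in>{x'..y'}. d \<le> Y s"
    using bounds by (metis atLeastAtMost_iff greaterThanLessThan_iff less_eq_real_def)
  moreover have "x' < y'"
    using bounds by simp
  ultimately show ?thesis
    using that bounds by blast
qed

lemma rational_level_chord:
  fixes X Y :: "real \<Rightarrow> real"
  assumes "x < y" and X_cont: "continuous_on {x..y} X" and Y_cont: "continuous_on {x..y} Y"
    and X_pos: "\<forall>s\<in>{x..y}. 0 < X s" and "Y x = Y y"
  obtains s t r where "s \<in> {x..y}" "t \<in> {x..y}" "s \<noteq> t" "r \<in> \<rat>" "Y s = Y t" "X s = r * X t"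
proof (cases "\<forall>s\<in>{x..y}. Y x \<le> Y s")
  case True
  show ?thesis
    by (rule rational_level_chord_above[OF assms True]) (rule that)
next
  case False
  then obtain m where m: "m \<in> {x..y}" "- Y x < - Y m"
    by auto
  have minus_Y_cont: "continuous_on {x..y} (\<lambda>s. - Y s)"
    using Y_cont by (rule continuous_on_minus)
  obtain x' y' where x'y': "x \<le> x'" "x' < y'" "y' \<le> y" "- Y x' = - Y x" "- Y y' = - Y x"
    and below: "\<forall>s\<in>{x'..y'}. - Y x \<le> - Y s"
    by (rule level_interval_above[OF minus_Y_cont _ _ m]) (use \<open>Y x = Y y\<close> in simp_all)
  have sub: "{x'..y'} \<subseteq> {x..y}"
    using x'y' by auto
  obtain s t r where st: "s \<in> {x'..y'}" "t \<in> {x'..y'}" "s \<noteq> t" "r \<in> \<rat>"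
    and "- Y s = - Y t" "X s = r * X t"
  proof (rule rational_level_chord_above[of x' y' X "\<lambda>s. - Y s"])
    show "continuous_on {x'..y'} X" "continuous_on {x'..y'} (\<lambda>s. - Y s)"
      using continuous_on_subset[OF X_cont sub] continuous_on_subset[OF minus_Y_cont sub] .
    show "x' < y'" "\<forall>s\<in>{x'..y'}. 0 < X s" "- Y x' = - Y y'" "\<forall>s\<in>{x'..y'}. - Y x' \<le> - Y s"
      using x'y' below X_pos sub by auto
  qed
  then have "Y s = Y t"
    by simp
  show ?thesis
    by (rule that[OF _ _ st(3,4) \<open>Y s = Y t\<close> \<open>X s = r * X t\<close>]) (use st sub in auto)
qed

lemma sum_list_replicate_scaleR: "sum_list (replicate n v) = real n *\<^sub>R (v :: 'a::real_vector)"
  by (induction n) (simp_all add: algebra_simps)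

lemma quasi_sum_mean_replicate: "quasi_sum_mean F G (replicate n z) = G (real n *\<^sub>R F z)"
  by (simp add: quasi_sum_mean_def sum_list_replicate_scaleR)

lemma repetition_invariant_mean_scaled:
  assumes "is_mean_on I (quasi_sum_mean F G)" "repetition_invariant_on I (quasi_sum_mean F G)"
    and "z \<in> I" "0 < n"
  shows "G (real n *\<^sub>R F z) = z"
proof -
  have "G (real n *\<^sub>R F z) = quasi_sum_mean F G (concat (map (replicate n) [z]))"
    by (simp add: quasi_sum_mean_replicate)
  also have "\<dots> = quasi_sum_mean F G [z]"
    using assms(3,4) by (intro assms(2)[unfolded repetition_invariant_on_def, rule_format]) auto
  also have "\<dots> = z"
    using assms(1)[unfolded is_mean_on_def, rule_format, of "[z]"] assms(3) by auto
  finally show ?thesis .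
qed

lemma repetition_invariant_mean_eq_if_rational_multiple:
  assumes "is_mean_on I (quasi_sum_mean F G)" "repetition_invariant_on I (quasi_sum_mean F G)"
    and "s \<in> I" "t \<in> I" "r \<in> \<rat>" "0 < r" "F s = r *\<^sub>R F t"
  shows "s = t"
proof -
  obtain m n :: nat where "n \<noteq> 0" "\<bar>r\<bar> = real m / real n"
    using Rats_abs_nat_div_natE[OF \<open>r \<in> \<rat>\<close>] by metis
  then have "r = real m / real n" "0 < m"
    using \<open>0 < r\<close> by (auto simp: zero_less_divide_iff)
  then have "real n *\<^sub>R F s = real m *\<^sub>R F t"
    using \<open>F s = r *\<^sub>R F t\<close> \<open>n \<noteq> 0\<close> by simp
  moreover have "G (real n *\<^sub>R F s) = s" "G (real m *\<^sub>R F t) = t"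
    using repetition_invariant_mean_scaled[OF assms(1,2)] assms(3,4) \<open>n \<noteq> 0\<close> \<open>0 < m\<close> by auto
  ultimately show ?thesis
    by simp
qed

lemma repetition_invariant_mean_eq_if_rational_level_chord:
  fixes f g :: "real \<Rightarrow> real"
  assumes "is_mean_on I (quasi_sum_mean (\<lambda>x. (f x, g x)) G)"
    and "repetition_invariant_on I (quasi_sum_mean (\<lambda>x. (f x, g x)) G)"
    and "s \<in> I" "t \<in> I" "0 < g s" "0 < g t"
    and "r \<in> \<rat>" "f s / g s = f t / g t" "g s = r * g t"
  shows "s = t"
proof (rule repetition_invariant_mean_eq_if_rational_multiple[OF assms(1-4,7)])
  show "0 < r"
    using \<open>g s = r * g t\<close> assms(5,6) by (metis zero_less_mult_pos2)
  then have "f s = r * f t"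
    using \<open>f s / g s = f t / g t\<close> \<open>g s = r * g t\<close> \<open>0 < g t\<close> by (simp add: field_simps)
  then show "(f s, g s) = r *\<^sub>R (f t, g t)"
    using \<open>g s = r * g t\<close> by simp
qed

theorem lemma5p4:
  fixes a b :: real and f g :: "real \<Rightarrow> real" and G :: "real \<times> real \<Rightarrow> real"
  assumes "a \<le> b"
    and "continuous_on {a..b} f" and "continuous_on {a..b} g"
    and "continuous_on UNIV G" and "\<forall>p. G p \<in> {a..b}"
    and "is_mean_on {a..b} (quasi_sum_mean (\<lambda>x. (f x, g x)) G)"
    and "repetition_invariant_on {a..b} (quasi_sum_mean (\<lambda>x. (f x, g x)) G)"
    and "\<not> (\<exists>e. negligible_element {a..b} (quasi_sum_mean (\<lambda>x. (f x, g x)) G) e)"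
    and "\<forall>x\<in>{a..b}. g x > 0"
  shows "inj_on (\<lambda>x. f x / g x) {a..b}"
proof -
  have ratio_differs: "f x / g x \<noteq> f y / g y" if "x \<in> {a..b}" "y \<in> {a..b}" "x < y" for x y
  proof
    assume ratio_eq: "f x / g x = f y / g y"
    have sub: "{x..y} \<subseteq> {a..b}"
      using that by auto
    have g_pos: "\<forall>s\<in>{x..y}. 0 < g s"
      using assms(9) sub by auto
    have g: "continuous_on {x..y} g"
      using continuous_on_subset[OF assms(3) sub] .
    have "continuous_on {x..y} (\<lambda>s. f s / g s)"
      using continuous_on_subset[OF assms(2) sub] g g_pos by (intro continuous_on_divide) auto
    then obtain s t r where st: "s \<in> {x..y}" "t \<in> {x..y}" "s \<noteq> t" "r \<in> \<rat>"
      "f s / g s = f t / g t" "g s = r * g t"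
      by (rule rational_level_chord[OF \<open>x < y\<close> g _ g_pos ratio_eq])
    have "s = t"
      using st(1,2) sub g_pos
      by (intro repetition_invariant_mean_eq_if_rational_level_chord[OF assms(6,7) _ _ _ _ st(4-6)]) auto
    with st(3) show False
      by contradiction
  qed
  show ?thesis
  proof (rule inj_onI)
    fix x y
    assume "x \<in> {a..b}" "y \<in> {a..b}" "f x / g x = f y / g y"
    then show "x = y"
      using ratio_differs[of x y] ratio_differs[of y x] by (cases x y rule: linorder_cases) auto
  qed
qed

end
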